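(* Assume the block-sparse setting described in the context, with adversarial noise satisfying $\|w\|_2\le\varepsilon$ for a known constant $\varepsilon>0$, and assume $x\neq 0$. Suppose that $$(1-(d-1)\nu)\,x_{\min} > 2\varepsilon\sqrt{1+(d-1)\nu} + (2k-1)\,d\,\mu_B\,x_{\max}.$$ Then the block-thresholding (BTH) estimate satisfies $S\subseteq \hat S$ (i.e., BTH identifies all elements of the support of $x$), and $$\|\hat x_{\mathrm{BTH}}-x\|_2^2 \le \frac{\varepsilon^2}{1-(d-1)\nu-(k-1)d\mu_B}.$$
   Context: Setting: $N=Md$. For $v\in\mathbb{C}^N$, $v[i]=(v_{(i-1)d+1},\dots,v_{id})^T$ is its $i$-th block ($1\le i\le M$); for a matrix $A$ with $N$ columns, $A[i]$ is the submatrix of columns $(i-1)d+1,\dots,id$. The (block) support is $\mathrm{supp}(v)=\{i: v[i]\neq 0\}$. For an index set $I=\{i_1<\dots<i_p\}$, $v_I$ is the concatenation of the blocks $v[i_1],\dots,v[i_p]$ and $A_I=[A[i_1],\dots,A[i_p]]$. The unknown deterministic vector $x\in\mathbb{C}^N$ has at most $k$ nonzero blocks (with $k$ known); $S=\mathrm{supp}(x)$, $s=|S|$, $x_{\max}=\max_{i\in S}\|x[i]\|_2$, $x_{\min}=\min_{i\in S}\|x[i]\|_2$. Observations are $y=Dx+w$ where $D\in\mathbb{C}^{L\times N}$ is known with columns $d_1,\dots,d_N$ of unit $\ell_2$ norm, $L<N$, and $D_I$ has full column rank for every index set $I$ with $|I|\le k$. Block coherence: $\mu_B=\max_{i\neq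 j}\frac1d\|D[i]^*D[j]\|$ (spectral norm). Sub-coherence: $\nu=\max_{1\le \ell\le M}\max_{(\ell-1)d+1\le i\neq j\le \ell d}|d_i^*d_j|$. BTH algorithm: compute $\rho_i=\|D[i]^*y\|_2$ for $i=1,\dots,M$; choose a set $\hat S$ of $k$ indices with $\rho_i\ge\rho_j$ for all $i\in\hat S$, $j\notin\hat S$ (ties broken arbitrarily); output $\hat x_{\mathrm{BTH}}$ defined by $(\hat x_{\mathrm{BTH}})_{\hat S}=D_{\hat S}^{\dagger}y$ (least squares on the blocks of $\hat S$) and zero on all other blocks. Here $^\dagger$ is the Moore–Penrose pseudoinverse. *)

theory Defs
  imports Complex_Main
begin

text \<open>Conventions: vectors are functions nat => complex, meaningful on indices below the
dimension; matrices are functions nat => nat => complex (row, column).  Everything is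
0-indexed: block i (i < M) of a vector of length N = M*d consists of entries
i*d, ..., i*d + d - 1.\<close>

definition vnorm :: "nat \<Rightarrow> (nat \<Rightarrow> complex) \<Rightarrow> real" where
  "vnorm n v = sqrt (\<Sum>i<n. (cmod (v i))\<^sup>2)"

definition blk :: "nat \<Rightarrow> (nat \<Rightarrow> complex) \<Rightarrow> nat \<Rightarrow> (nat \<Rightarrow> complex)" where
  "blk d v i = (\<lambda>j. v (i * d + j))"

definition blocknorm :: "nat \<Rightarrow> (nat \<Rightarrow> complex) \<Rightarrow> nat \<Rightarrow> real" where
  "blocknorm d v i = vnorm d (blk d v i)"

definition bsupp :: "nat \<Rightarrow> nat \<Rightarrow> (nat \<Rightarrow> complex) \<Rightarrow> nat set" where
  "bsupp M d v = {i. i < M \<and> (\<exists>j<d. v (i * d + j) \<noteq> 0)}"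

definition matvec :: "nat \<Rightarrow> nat \<Rightarrow> (nat \<Rightarrow> nat \<Rightarrow> complex) \<Rightarrow> (nat \<Rightarrow> complex) \<Rightarrow> (nat \<Rightarrow> complex)" where
  "matvec L N A v = (\<lambda>r. \<Sum>c<N. A r c * v c)"

definition specnorm :: "nat \<Rightarrow> nat \<Rightarrow> (nat \<Rightarrow> nat \<Rightarrow> complex) \<Rightarrow> real" where
  "specnorm m n A = Sup {vnorm m (matvec m n A u) | u. vnorm n u = 1}"

definition blockgram :: "nat \<Rightarrow> nat \<Rightarrow> (nat \<Rightarrow> nat \<Rightarrow> complex) \<Rightarrow> nat \<Rightarrow> nat \<Rightarrow> (nat \<Rightarrow> nat \<Rightarrow> complex)" where
  "blockgram L d D i j = (\<lambda>a b. \<Sum>r<L. cnj (D r (i * d + a)) * D r (j * d + b))"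

text \<open>Block coherence mu_B (convention: 0 if there is only one block).\<close>
definition block_coherence :: "nat \<Rightarrow> nat \<Rightarrow> nat \<Rightarrow> (nat \<Rightarrow> nat \<Rightarrow> complex) \<Rightarrow> real" where
  "block_coherence L M d D =
     Max (insert 0 {specnorm d d (blockgram L d D i j) / real d | i j. i < M \<and> j < M \<and> i \<noteq> j})"

text \<open>Sub-coherence nu (convention: 0 if d = 1).\<close>
definition sub_coherence :: "nat \<Rightarrow> nat \<Rightarrow> nat \<Rightarrow> (nat \<Rightarrow> nat \<Rightarrow> complex) \<Rightarrow> real" where
  "sub_coherence L M d D =
     Max (insert 0 {cmod (\<Sum>r<L. cnj (D r (l * d + a)) * D r (l * d + b)) | l a b.
                      l < M \<and> a < d \<and> b < d \<and> a \<noteq> b})"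

definition rho :: "nat \<Rightarrow> nat \<Rightarrow> (nat \<Rightarrow> nat \<Rightarrow> complex) \<Rightarrow> (nat \<Rightarrow> complex) \<Rightarrow> nat \<Rightarrow> real" where
  "rho L d D y i = vnorm d (\<lambda>a. \<Sum>r<L. cnj (D r (i * d + a)) * y r)"

definition supported_on :: "nat \<Rightarrow> nat \<Rightarrow> nat set \<Rightarrow> (nat \<Rightarrow> complex) \<Rightarrow> bool" where
  "supported_on M d I v \<longleftrightarrow> (\<forall>c < M * d. c div d \<notin> I \<longrightarrow> v c = 0)"

definition full_rank_k :: "nat \<Rightarrow> nat \<Rightarrow> nat \<Rightarrow> nat \<Rightarrow> (nat \<Rightarrow> nat \<Rightarrow> complex) \<Rightarrow> bool" where
  "full_rank_k L M d k D \<longleftrightarrow>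
     (\<forall>I. I \<subseteq> {..<M} \<and> card I \<le> k \<longrightarrow>
        (\<forall>v. supported_on M d I v \<and> (\<forall>r<L. matvec L (M * d) D v r = 0)
              \<longrightarrow> (\<forall>c < M * d. v c = 0)))"

definition bth_selection :: "nat \<Rightarrow> nat \<Rightarrow> nat \<Rightarrow> nat \<Rightarrow> (nat \<Rightarrow> nat \<Rightarrow> complex) \<Rightarrow> (nat \<Rightarrow> complex) \<Rightarrow> nat set \<Rightarrow> bool" where
  "bth_selection L M d k D y Sh \<longleftrightarrow>
     Sh \<subseteq> {..<M} \<and> card Sh = k \<and>
     (\<forall>i\<in>Sh. \<forall>j\<in>{..<M} - Sh. rho L d D y j \<le> rho L d D y i)"

text \<open>BTH estimate: zero outside the blocks of Sh, and least squares on the blocks of Sh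
  (for D_Sh of full column rank this is exactly D_Sh^dagger y on Sh).\<close>
definition bth_estimate :: "nat \<Rightarrow> nat \<Rightarrow> nat \<Rightarrow> (nat \<Rightarrow> nat \<Rightarrow> complex) \<Rightarrow> (nat \<Rightarrow> complex) \<Rightarrow> nat set \<Rightarrow> (nat \<Rightarrow> complex) \<Rightarrow> bool" where
  "bth_estimate L M d D y Sh xh \<longleftrightarrow>
     supported_on M d Sh xh \<and>
     (\<forall>z. supported_on M d Sh z \<longrightarrow>
        vnorm L (\<lambda>r. y r - matvec L (M * d) D xh r) \<le> vnorm L (\<lambda>r. y r - matvec L (M * d) D z r))"

end

theory Submission
  imports Defs "HOL-Analysis.L2_Norm"
begin

text \<open>
  With unit-norm columns each block D[i] is an approximate isometry with
  constants 1 +- (d-1) nu, and images of distinct blocks have correlation at most d mu_B.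
  Hence rho_i = |D[i]^* y| is at least (1-(d-1)nu) x_min - (k-1) d mu_B x_max - sqrt(1+(d-1)nu) eps
  on S and at most k d mu_B x_max + sqrt(1+(d-1)nu) eps off S; the threshold condition
  separates the two, so the k largest correlations include all of S.

  Once S is contained in the selected set, the least-squares error D(xh - x) is
  the projection of w onto the range of the selected blocks, so its norm is at most eps;
  a Gershgorin-type lower bound for D on k blocks, with constant
  1-(d-1)nu-(k-1) d mu_B, turns this into the bound on |xh - x|.
\<close>

section \<open>Finite complex vectors\<close>

definition ip :: "nat \<Rightarrow> (nat \<Rightarrow> complex) \<Rightarrow> (nat \<Rightarrow> complex) \<Rightarrow> complex" where
  "ip n u v = (\<Sum>a<n. cnj (u a) * v a)"

lemma vnorm_L2_set: "vnorm n u = L2_set (\<lambda>a. cmod (u a)) {..<n}"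
  by (simp add: vnorm_def L2_set_def)

lemma vnorm_nonneg: "0 \<le> vnorm n u"
  by (simp add: vnorm_def sum_nonneg)

lemma vnorm_sq: "(vnorm n u)\<^sup>2 = (\<Sum>a<n. (cmod (u a))\<^sup>2)"
  by (simp add: vnorm_def sum_nonneg)

lemma vnorm_eq_0D: "vnorm n u = 0 \<Longrightarrow> a < n \<Longrightarrow> u a = 0"
  unfolding vnorm_def by (simp add: sum_nonneg_eq_0_iff)

lemma entry_le_vnorm: "a < n \<Longrightarrow> cmod (u a) \<le> vnorm n u"
  unfolding vnorm_def by (rule real_le_rsqrt) (auto intro: member_le_sum)

lemma vnorm_scale: "vnorm n (\<lambda>a. c * u a) = cmod c * vnorm n u"
proof -
  have "(\<Sum>a<n. (cmod (c * u a))\<^sup>2) = (cmod c)\<^sup>2 * (\<Sum>a<n. (cmod (u a))\<^sup>2)"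
    by (simp add: norm_mult power_mult_distrib sum_distrib_left)
  then show ?thesis unfolding vnorm_def by (simp add: real_sqrt_mult)
qed

lemma ip_self: "ip n u u = complex_of_real ((vnorm n u)\<^sup>2)"
  unfolding vnorm_sq ip_def of_real_sum
  by (rule sum.cong[OF refl]) (metis complex_norm_square mult.commute)

lemma ip_Cauchy_Schwarz: "cmod (ip n u v) \<le> vnorm n u * vnorm n v"
proof -
  have "cmod (ip n u v) \<le> (\<Sum>a<n. cmod (u a) * cmod (v a))"
    unfolding ip_def by (rule order_trans[OF norm_sum]) (simp add: norm_mult)
  also have "\<dots> \<le> vnorm n u * vnorm n v"
    unfolding vnorm_L2_set using L2_set_mult_ineq[of "\<lambda>a. cmod (u a)" "\<lambda>a. cmod (v a)"] by simp
  finally show ?thesis .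
qed

lemma ip_add_right: "ip n u (\<lambda>r. f r + g r) = ip n u f + ip n u g"
  by (simp add: ip_def distrib_left sum.distrib)

lemma ip_sum_right: "ip n u (\<lambda>r. \<Sum>l\<in>T. F l r) = (\<Sum>l\<in>T. ip n u (F l))"
  by (simp add: ip_def sum_distrib_left sum.swap[of _ T])

lemma ip_sum_left: "ip n (\<lambda>r. \<Sum>l\<in>T. F l r) v = (\<Sum>l\<in>T. ip n (F l) v)"
  by (simp add: ip_def sum_distrib_right sum.swap[of _ T] cnj_sum)

lemma vnorm_line_sq:
  "(vnorm n (\<lambda>r. p r - complex_of_real t * q r))\<^sup>2
     = (vnorm n p)\<^sup>2 - 2 * t * Re (ip n p q) + t\<^sup>2 * (vnorm n q)\<^sup>2"
proof -
  have "(cmod (a - complex_of_real t * b))\<^sup>2 = (cmod a)\<^sup>2 - 2 * t * Re (cnj a * b) + t\<^sup>2 * (cmod b)\<^sup>2"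
    for a b
    by (simp only: cmod_power2) (simp add: power2_eq_square algebra_simps)
  then show ?thesis unfolding vnorm_sq ip_def
    by (simp add: sum.distrib sum_subtractf sum_distrib_left Re_sum distrib_left)
qed

lemma orthogonal_if_shortest_on_line:
  assumes min: "\<And>t. (vnorm n p)\<^sup>2 \<le> (vnorm n (\<lambda>r. p r - complex_of_real t * q r))\<^sup>2"
  shows "Re (ip n p q) = 0"
proof (cases "vnorm n q = 0")
  case True
  then have "ip n p q = 0" unfolding ip_def by (simp add: vnorm_eq_0D)
  then show ?thesis by simp
next
  case False
  define R where "R = Re (ip n p q)"
  define B where "B = (vnorm n q)\<^sup>2"
  have B_pos: "0 < B" using False unfolding B_def by simp
  have "(vnorm n p)\<^sup>2 \<le> (vnorm n p)\<^sup>2 - 2 * (R / B) * R + (R / B)\<^sup>2 * B"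
    using min[of "R / B"] unfolding vnorm_line_sq R_def B_def .
  then have "R\<^sup>2 / B \<le> 0" using B_pos by (simp add: power2_eq_square field_simps)
  then have "R\<^sup>2 \<le> 0" using B_pos by (simp add: divide_le_0_iff)
  then show ?thesis unfolding R_def by simp
qed

lemma sum_sq_le_card_mult:
  fixes t :: "'a \<Rightarrow> real"
  shows "(\<Sum>a\<in>A. t a)\<^sup>2 \<le> real (card A) * (\<Sum>a\<in>A. (t a)\<^sup>2)"
proof (cases "finite A")
  case True
  have "\<bar>\<Sum>a\<in>A. t a\<bar> \<le> (\<Sum>a\<in>A. \<bar>t a\<bar> * \<bar>1\<bar>)" by (simp add: sum_abs)
  also have "\<dots> \<le> L2_set t A * L2_set (\<lambda>_. 1::real) A" by (rule L2_set_mult_ineq)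
  finally have "\<bar>\<Sum>a\<in>A. t a\<bar>\<^sup>2 \<le> (L2_set t A * L2_set (\<lambda>_. 1::real) A)\<^sup>2"
    by (rule power_mono) simp
  also have "\<dots> = (\<Sum>a\<in>A. (t a)\<^sup>2) * real (card A)"
    by (simp add: power_mult_distrib L2_set_def sum_nonneg)
  finally show ?thesis by (simp add: mult.commute)
qed simp

lemma offdiagonal_sum_le:
  fixes t :: "'a \<Rightarrow> real"
  assumes "finite A"
  shows "(\<Sum>a\<in>A. \<Sum>b\<in>A - {a}. t a * t b) \<le> (real (card A) - 1) * (\<Sum>a\<in>A. (t a)\<^sup>2)"
proof -
  have "(\<Sum>a\<in>A. \<Sum>b\<in>A. t a * t b) = (\<Sum>a\<in>A. t a * t a + (\<Sum>b\<in>A - {a}. t a * t b))"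
    using assms by (intro sum.cong refl) (simp add: sum.remove)
  then have "(\<Sum>a\<in>A. \<Sum>b\<in>A - {a}. t a * t b) = (\<Sum>a\<in>A. t a)\<^sup>2 - (\<Sum>a\<in>A. (t a)\<^sup>2)"
    by (simp add: sum.distrib power2_eq_square sum_product)
  then show ?thesis using sum_sq_le_card_mult[of t A] by (simp add: algebra_simps)
qed

lemma specnorm_bound: "vnorm n (matvec n n A u) \<le> specnorm n n A * vnorm n u"
proof (cases "vnorm n u = 0")
  case True
  then have "matvec n n A u r = 0" for r unfolding matvec_def by (simp add: vnorm_eq_0D)
  then show ?thesis using True by (simp add: vnorm_def)
next
  case False
  define t where "t = vnorm n u"
  have t_pos: "t > 0" using False vnorm_nonneg[of n u] unfolding t_def by linarith
  define u' where "u' = (\<lambda>a. complex_of_real (1 / t) * u a)"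
  have u'_unit: "vnorm n u' = 1"
    unfolding u'_def vnorm_scale using t_pos by (simp add: t_def norm_divide)
  have Au': "matvec n n A u' = (\<lambda>r. complex_of_real (1 / t) * matvec n n A u r)"
    unfolding u'_def matvec_def by (simp add: sum_distrib_left mult.left_commute)
  txt \<open>The set in the supremum is bounded by the sum of the moduli of the entries.\<close>
  have bounded: "vnorm n (matvec n n A v) \<le> (\<Sum>r<n. \<Sum>c<n. cmod (A r c))" if "vnorm n v = 1" for v
  proof -
    have "vnorm n (matvec n n A v) \<le> (\<Sum>r<n. cmod (matvec n n A v r))"
      unfolding vnorm_L2_set by (rule L2_set_le_sum) simp
    also have "\<dots> \<le> (\<Sum>r<n. \<Sum>c<n. cmod (A r c) * cmod (v c))"
      unfolding matvec_def by (intro sum_mono order_trans[OF norm_sum]) (simp add: norm_mult)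
    also have "\<dots> \<le> (\<Sum>r<n. \<Sum>c<n. cmod (A r c))"
      using entry_le_vnorm[of _ n v] that by (intro sum_mono) (simp add: mult_left_le)
    finally show ?thesis .
  qed
  have "vnorm n (matvec n n A u') \<le> specnorm n n A"
    unfolding specnorm_def
    by (rule cSup_upper) (use u'_unit bounded in \<open>auto intro!: bdd_aboveI\<close>)
  then have "vnorm n (matvec n n A u) / t \<le> specnorm n n A"
    using t_pos unfolding Au' vnorm_scale by (simp add: norm_divide)
  then show ?thesis using t_pos by (simp add: t_def pos_divide_le_eq)
qed

definition blockmul :: "nat \<Rightarrow> (nat \<Rightarrow> nat \<Rightarrow> complex) \<Rightarrow> nat \<Rightarrow> (nat \<Rightarrow> complex) \<Rightarrow> (nat \<Rightarrow> complex)" where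
  "blockmul d D i u = (\<lambda>r. \<Sum>a<d. D r (i * d + a) * u a)"

definition block_adj :: "nat \<Rightarrow> nat \<Rightarrow> (nat \<Rightarrow> nat \<Rightarrow> complex) \<Rightarrow> nat \<Rightarrow> (nat \<Rightarrow> complex) \<Rightarrow> (nat \<Rightarrow> complex)" where
  "block_adj L d D i y = (\<lambda>a. \<Sum>r<L. cnj (D r (i * d + a)) * y r)"

lemma rho_block_adj: "rho L d D y i = vnorm d (block_adj L d D i y)"
  by (simp add: rho_def block_adj_def)

lemma ip_block_adj: "ip d u (block_adj L d D i y) = ip L (blockmul d D i u) y"
  unfolding ip_def blockmul_def block_adj_def
  by (simp add: cnj_sum sum_distrib_left sum_distrib_right sum.swap[of _ "{..<L}"]
      mult.commute mult.left_commute)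

lemma ip_blockmul:
  "ip L (blockmul d D i u) (blockmul d D l v) = ip d u (matvec d d (blockgram L d D i l) v)"
proof -
  define g where "g = (\<lambda>r a b. cnj (u a) * (cnj (D r (i * d + a)) * D r (l * d + b) * v b))"
  have "ip L (blockmul d D i u) (blockmul d D l v) = (\<Sum>r<L. \<Sum>b<d. \<Sum>a<d. g r a b)"
    unfolding ip_def blockmul_def g_def
    by (simp add: cnj_sum sum_product mult.commute mult.left_commute)
  also have "\<dots> = (\<Sum>b<d. \<Sum>a<d. \<Sum>r<L. g r a b)"
    by (subst sum.swap) (intro sum.cong refl sum.swap)
  also have "\<dots> = (\<Sum>a<d. \<Sum>b<d. \<Sum>r<L. g r a b)"
    by (rule sum.swap)
  also have "\<dots> = ip d u (matvec d d (blockgram L d D i l) v)"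
    unfolding ip_def matvec_def blockgram_def g_def
    by (simp add: sum_distrib_left sum_distrib_right)
  finally show ?thesis .
qed

lemma correlation_le_rho: "cmod (ip L (blockmul d D i u) y) \<le> vnorm d u * rho L d D y i"
  unfolding rho_block_adj ip_block_adj[symmetric] by (rule ip_Cauchy_Schwarz)

lemma rho_le_if_correlations_le:
  assumes C: "0 \<le> C" and corr: "\<And>u. cmod (ip L (blockmul d D i u) y) \<le> C * vnorm d u"
  shows "rho L d D y i \<le> C"
proof -
  define \<rho> where "\<rho> = rho L d D y i"
  have "\<rho>\<^sup>2 = cmod (ip L (blockmul d D i (block_adj L d D i y)) y)"
    unfolding \<rho>_def rho_block_adj ip_block_adj[symmetric] ip_self by (simp add: norm_power)
  also have "\<dots> \<le> C * \<rho>" using corr unfolding \<rho>_def rho_block_adj .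
  finally have "\<rho> * \<rho> \<le> C * \<rho>" by (simp add: power2_eq_square)
  moreover have "0 \<le> \<rho>" unfolding \<rho>_def rho_block_adj by (rule vnorm_nonneg)
  ultimately show ?thesis unfolding \<rho>_def[symmetric] using C
    by (cases "\<rho> = 0") (auto intro: mult_right_le_imp_le)
qed

lemma sum_blocks: "(\<Sum>c<(M::nat) * d. f c) = (\<Sum>l<M. \<Sum>a<d. f (l * d + a))"
proof (induction M)
  case (Suc M)
  have "(\<Sum>c<Suc M * d. f c) = (\<Sum>c<M * d. f c) + (\<Sum>c\<in>{M * d..<M * d + d}. f c)"
    by (simp add: lessThan_atLeast0 sum.atLeastLessThan_concat add.commute)
  also have "(\<Sum>c\<in>{M * d..<M * d + d}. f c) = (\<Sum>a<d. f (M * d + a))"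
    using sum.shift_bounds_nat_ivl[of f 0 "M * d" d] by (simp add: lessThan_atLeast0 add.commute)
  finally show ?case using Suc by simp
qed simp

lemma block_index_less: "l < M \<Longrightarrow> a < d \<Longrightarrow> l * d + a < M * (d::nat)"
proof -
  assume "l < M" "a < d"
  then have "l * d + a < Suc l * d" by simp
  also have "\<dots> \<le> M * d" using \<open>l < M\<close> by (intro mult_le_mono1) simp
  finally show ?thesis .
qed

lemma supported_on_zero:
  assumes "supported_on M d T v" "l < M" "l \<notin> T" "a < d"
  shows "v (l * d + a) = 0"
  using assms block_index_less[of l M a d] unfolding supported_on_def by auto

lemma matvec_blocks:
  assumes "supported_on M d T v" "T \<subseteq> {..<M}"
  shows "matvec L (M * d) D v r = (\<Sum>l\<in>T. blockmul d D l (blk d v l) r)"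
proof -
  have "matvec L (M * d) D v r = (\<Sum>l<M. blockmul d D l (blk d v l) r)"
    unfolding matvec_def blockmul_def blk_def by (rule sum_blocks)
  also have "\<dots> = (\<Sum>l\<in>T. blockmul d D l (blk d v l) r)"
    using assms(2) by (intro sum.mono_neutral_right)
      (auto simp: blockmul_def blk_def supported_on_zero[OF assms(1)])
  finally show ?thesis .
qed

lemma vnorm_blocks:
  assumes "supported_on M d T v" "T \<subseteq> {..<M}"
  shows "(vnorm (M * d) v)\<^sup>2 = (\<Sum>l\<in>T. (blocknorm d v l)\<^sup>2)"
proof -
  have "(vnorm (M * d) v)\<^sup>2 = (\<Sum>l<M. (blocknorm d v l)\<^sup>2)"
    unfolding vnorm_sq blocknorm_def blk_def by (rule sum_blocks)
  also have "\<dots> = (\<Sum>l\<in>T. (blocknorm d v l)\<^sup>2)"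
    using assms(2) by (intro sum.mono_neutral_right)
      (auto simp: blocknorm_def vnorm_sq blk_def supported_on_zero[OF assms(1)])
  finally show ?thesis .
qed

lemma bsupp_properties:
  assumes nz: "\<exists>c < M * d. x c \<noteq> 0"
  shows "0 < d" and "bsupp M d x \<subseteq> {..<M}" and "bsupp M d x \<noteq> {}"
    and "supported_on M d (bsupp M d x) x"
    and "\<And>l. l \<in> bsupp M d x \<Longrightarrow> 0 < blocknorm d x l"
proof -
  obtain c0 where c0: "c0 < M * d" "x c0 \<noteq> 0" using nz by blast
  show d_pos: "0 < d" using c0(1) by (cases d) auto
  show "bsupp M d x \<subseteq> {..<M}" unfolding bsupp_def by auto
  have in_bsupp: "c div d \<in> bsupp M d x" if "c < M * d" "x c \<noteq> 0" for c
  proof -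
    have "c div d < M" using that(1) by (simp add: less_mult_imp_div_less)
    moreover have "x ((c div d) * d + c mod d) \<noteq> 0" using that(2) by simp
    ultimately show ?thesis unfolding bsupp_def using d_pos by (auto intro!: exI[of _ "c mod d"])
  qed
  then show "bsupp M d x \<noteq> {}" using c0 by blast
  show "supported_on M d (bsupp M d x) x" unfolding supported_on_def using in_bsupp by blast
  fix l assume "l \<in> bsupp M d x"
  then obtain j where "j < d" "x (l * d + j) \<noteq> 0" unfolding bsupp_def by blast
  then have "blocknorm d x l \<noteq> 0"
    unfolding blocknorm_def blk_def using vnorm_eq_0D[of d "\<lambda>j. x (l * d + j)" j] by auto
  then show "0 < blocknorm d x l"
    using vnorm_nonneg[of d "blk d x l"] unfolding blocknorm_def by linarith
qed

section \<open>Coherence bounds on the block Gram matrices\<close>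

lemma sub_coherence_set_finite:
  fixes L M d :: nat and D :: "nat \<Rightarrow> nat \<Rightarrow> complex"
  shows "finite {cmod (\<Sum>r<L. cnj (D r (l * d + a)) * D r (l * d + b)) | l a b.
             l < M \<and> a < d \<and> b < d \<and> a \<noteq> b}"
proof (rule finite_subset)
  show "finite ((\<lambda>(l, a, b). cmod (\<Sum>r<L. cnj (D r (l * d + a)) * D r (l * d + b)))
                 ` ({..<M} \<times> {..<d} \<times> {..<d}))" by (intro finite_imageI finite_cartesian_product) auto
qed (auto simp: image_iff; blast)

lemma block_coherence_set_finite:
  fixes L M d :: nat and D :: "nat \<Rightarrow> nat \<Rightarrow> complex"
  shows "finite {specnorm d d (blockgram L d D i j) / real d | i j. i < M \<and> j < M \<and> i \<noteq> j}"
proof (rule finite_subset)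
  show "finite ((\<lambda>(i, j). specnorm d d (blockgram L d D i j) / real d) ` ({..<M} \<times> {..<M}))"
    by simp
qed (auto simp: image_iff; blast)

lemma sub_coherence_nonneg: "0 \<le> sub_coherence L M d D"
  unfolding sub_coherence_def using sub_coherence_set_finite by (intro Max_ge) auto

lemma block_coherence_nonneg: "0 \<le> block_coherence L M d D"
  unfolding block_coherence_def using block_coherence_set_finite by (intro Max_ge) auto

text \<open>The constant 1 + (d-1) nu, whose square root bounds the norm of each block D[i],
  is nonnegative (for d = 0 the sub-coherence is 0 by convention).\<close>
lemma sub_coherence_factor_nonneg: "0 \<le> 1 + (real d - 1) * sub_coherence L M d D"
proof (cases "d = 0")
  case True
  then show ?thesis by (simp add: sub_coherence_def)
next
  case False
  then show ?thesis using sub_coherence_nonneg[of L M d D] by simp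
qed

lemma sub_coherence_ge:
  assumes "i < M" "a < d" "b < d" "a \<noteq> b"
  shows "cmod (blockgram L d D i i a b) \<le> sub_coherence L M d D"
  unfolding sub_coherence_def blockgram_def
  using sub_coherence_set_finite assms by (intro Max_ge) auto

lemma block_coherence_ge:
  assumes "i < M" "j < M" "i \<noteq> j" "0 < d"
  shows "specnorm d d (blockgram L d D i j) \<le> real d * block_coherence L M d D"
proof -
  have "specnorm d d (blockgram L d D i j) / real d \<le> block_coherence L M d D"
    unfolding block_coherence_def using block_coherence_set_finite assms by (intro Max_ge) auto
  then show ?thesis using assms(4) by (simp add: divide_le_eq mult.commute)
qed

text \<open>With unit-norm columns the diagonal blocks are the identity up to the off-diagonal
  entries, so D[i] is an approximate isometry: its quadratic form deviates from the squared
  norm by at most (d-1) nu times the squared norm.\<close>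
lemma diagonal_block_deviation:
  assumes unit_cols: "\<forall>c < M * d. (\<Sum>r<L. (cmod (D r c))\<^sup>2) = 1" and i: "i < M"
  shows "cmod (ip L (blockmul d D i u) (blockmul d D i u) - complex_of_real ((vnorm d u)\<^sup>2))
          \<le> (real d - 1) * sub_coherence L M d D * (vnorm d u)\<^sup>2"
proof -
  define G where "G = blockgram L d D i i"
  define \<nu> where "\<nu> = sub_coherence L M d D"
  define off where "off = (\<Sum>a<d. \<Sum>b\<in>{..<d} - {a}. cnj (u a) * (G a b * u b))"
  have diag: "G a a = 1" if "a < d" for a
  proof -
    have "G a a = complex_of_real (\<Sum>r<L. (cmod (D r (i * d + a)))\<^sup>2)"
      unfolding G_def blockgram_def of_real_sum
      by (rule sum.cong[OF refl]) (metis complex_norm_square mult.commute)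
    then show ?thesis using unit_cols block_index_less[OF i that] by simp
  qed
  have "ip d u (matvec d d G u) = (\<Sum>a<d. cnj (u a) * u a + (\<Sum>b\<in>{..<d} - {a}. cnj (u a) * (G a b * u b)))"
    unfolding ip_def matvec_def sum_distrib_left
    by (intro sum.cong refl) (simp add: sum.remove[of "{..<d}"] diag)
  then have split: "ip d u (matvec d d G u) = ip d u u + off"
    unfolding off_def ip_def by (simp add: sum.distrib)
  have "cmod off \<le> (\<Sum>a<d. \<Sum>b\<in>{..<d} - {a}. \<nu> * (cmod (u a) * cmod (u b)))"
    unfolding off_def
  proof (intro order_trans[OF norm_sum] sum_mono)
    fix a b assume a: "a \<in> {..<d}" and b: "b \<in> {..<d} - {a}"
    have "cmod (G a b) \<le> \<nu>" unfolding G_def \<nu>_def using a b i by (intro sub_coherence_ge) auto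
    then have "cmod (G a b) * (cmod (u a) * cmod (u b)) \<le> \<nu> * (cmod (u a) * cmod (u b))"
      by (rule mult_right_mono) simp
    then show "cmod (cnj (u a) * (G a b * u b)) \<le> \<nu> * (cmod (u a) * cmod (u b))"
      by (simp add: norm_mult mult_ac)
  qed
  also have "\<dots> = \<nu> * (\<Sum>a<d. \<Sum>b\<in>{..<d} - {a}. cmod (u a) * cmod (u b))"
    by (simp add: sum_distrib_left)
  also have "\<dots> \<le> \<nu> * ((real d - 1) * (vnorm d u)\<^sup>2)"
    using offdiagonal_sum_le[of "{..<d}" "\<lambda>a. cmod (u a)"] sub_coherence_nonneg[of L M d D]
    unfolding \<nu>_def vnorm_sq by (intro mult_left_mono) auto
  finally have "cmod off \<le> (real d - 1) * \<nu> * (vnorm d u)\<^sup>2" by (simp add: mult_ac)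
  moreover have "ip L (blockmul d D i u) (blockmul d D i u) - complex_of_real ((vnorm d u)\<^sup>2) = off"
    unfolding ip_blockmul G_def[symmetric] split by (simp add: ip_self[of d u])
  ultimately show ?thesis unfolding \<nu>_def by simp
qed

lemma diagonal_block_lower:
  assumes "\<forall>c < M * d. (\<Sum>r<L. (cmod (D r c))\<^sup>2) = 1" "i < M"
  shows "(1 - (real d - 1) * sub_coherence L M d D) * (vnorm d u)\<^sup>2
          \<le> Re (ip L (blockmul d D i u) (blockmul d D i u))"
  using order_trans[OF abs_Re_le_cmod diagonal_block_deviation[OF assms, of u]]
  by (simp add: algebra_simps abs_le_iff)

lemma blockmul_norm_le:
  assumes "\<forall>c < M * d. (\<Sum>r<L. (cmod (D r c))\<^sup>2) = 1" "i < M"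
  shows "vnorm L (blockmul d D i u) \<le> sqrt (1 + (real d - 1) * sub_coherence L M d D) * vnorm d u"
proof -
  have "(vnorm L (blockmul d D i u))\<^sup>2 \<le> (1 + (real d - 1) * sub_coherence L M d D) * (vnorm d u)\<^sup>2"
    using order_trans[OF abs_Re_le_cmod diagonal_block_deviation[OF assms, of u]]
    by (simp add: ip_self algebra_simps abs_le_iff)
  then have "sqrt ((vnorm L (blockmul d D i u))\<^sup>2)
              \<le> sqrt ((1 + (real d - 1) * sub_coherence L M d D) * (vnorm d u)\<^sup>2)"
    by (rule real_sqrt_le_mono)
  then show ?thesis by (simp add: real_sqrt_mult vnorm_nonneg)
qed

lemma noise_correlation_le:
  assumes "\<forall>c < M * d. (\<Sum>r<L. (cmod (D r c))\<^sup>2) = 1" "i < M"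
  shows "cmod (ip L (blockmul d D i u) w)
          \<le> sqrt (1 + (real d - 1) * sub_coherence L M d D) * vnorm d u * vnorm L w"
  using order_trans[OF ip_Cauchy_Schwarz mult_right_mono[OF blockmul_norm_le[OF assms] vnorm_nonneg]] .

lemma cross_block_correlation_le:
  assumes "i < M" "l < M" "i \<noteq> l"
  shows "cmod (ip L (blockmul d D i u) (blockmul d D l v))
          \<le> real d * block_coherence L M d D * (vnorm d u * vnorm d v)"
proof (cases "d = 0")
  case True
  then show ?thesis by (simp add: ip_def blockmul_def)
next
  case False
  have "cmod (ip L (blockmul d D i u) (blockmul d D l v))
          \<le> vnorm d u * vnorm d (matvec d d (blockgram L d D i l) v)"
    unfolding ip_blockmul by (rule ip_Cauchy_Schwarz)
  also have "\<dots> \<le> vnorm d u * (specnorm d d (blockgram L d D i l) * vnorm d v)"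
    by (intro mult_left_mono specnorm_bound vnorm_nonneg)
  also have "\<dots> \<le> vnorm d u * (real d * block_coherence L M d D * vnorm d v)"
    using False by (intro mult_left_mono mult_right_mono block_coherence_ge assms vnorm_nonneg) auto
  finally show ?thesis by (simp add: mult_ac)
qed

lemma interference_le:
  assumes "T \<subseteq> {..<M}" "i < M" "i \<notin> T" "\<And>l. l \<in> T \<Longrightarrow> vnorm d (v l) \<le> X"
  shows "cmod (\<Sum>l\<in>T. ip L (blockmul d D i u) (blockmul d D l (v l)))
          \<le> real (card T) * (real d * block_coherence L M d D * X) * vnorm d u"
proof -
  have "cmod (\<Sum>l\<in>T. ip L (blockmul d D i u) (blockmul d D l (v l)))
          \<le> (\<Sum>l\<in>T. real d * block_coherence L M d D * X * vnorm d u)"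
  proof (intro order_trans[OF norm_sum] sum_mono)
    fix l assume l: "l \<in> T"
    have "cmod (ip L (blockmul d D i u) (blockmul d D l (v l)))
            \<le> real d * block_coherence L M d D * (vnorm d u * vnorm d (v l))"
      using assms l by (intro cross_block_correlation_le) auto
    also have "\<dots> \<le> real d * block_coherence L M d D * (vnorm d u * X)"
      using assms(4)[OF l] block_coherence_nonneg[of L M d D]
      by (intro mult_left_mono) (auto simp: vnorm_nonneg)
    finally show "cmod (ip L (blockmul d D i u) (blockmul d D l (v l)))
                    \<le> real d * block_coherence L M d D * X * vnorm d u" by (simp add: mult_ac)
  qed
  then show ?thesis by (simp add: mult_ac)
qed

section \<open>A lower restricted-isometry bound for few blocks\<close>

text \<open>On vectors living on a set T of blocks, D is bounded below: the diagonal blocks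
  contribute at least 1-(d-1)nu and each cross term costs at most d mu_B
  (Gershgorin-type argument).\<close>
lemma block_energy_lower:
  assumes unit_cols: "\<forall>c < M * d. (\<Sum>r<L. (cmod (D r c))\<^sup>2) = 1"
    and T: "finite T" "T \<subseteq> {..<M}"
  shows "(1 - (real d - 1) * sub_coherence L M d D
            - (real (card T) - 1) * real d * block_coherence L M d D) * (\<Sum>l\<in>T. (vnorm d (u l))\<^sup>2)
         \<le> (vnorm L (\<lambda>r. \<Sum>l\<in>T. blockmul d D l (u l) r))\<^sup>2"
proof -
  define a0 where "a0 = 1 - (real d - 1) * sub_coherence L M d D"
  define P where "P = real d * block_coherence L M d D"
  define t where "t = (\<lambda>l. vnorm d (u l))"
  define g where "g = (\<lambda>i l. Re (ip L (blockmul d D i (u i)) (blockmul d D l (u l))))"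
  have P_nonneg: "0 \<le> P" unfolding P_def using block_coherence_nonneg by simp
  have per_block: "a0 * (t i)\<^sup>2 - (\<Sum>l\<in>T - {i}. P * (t i * t l)) \<le> g i i + (\<Sum>l\<in>T - {i}. g i l)"
    if i: "i \<in> T" for i
  proof -
    have "a0 * (t i)\<^sup>2 \<le> g i i"
      unfolding a0_def t_def g_def using diagonal_block_lower[OF unit_cols] i T by auto
    moreover have "- (P * (t i * t l)) \<le> g i l" if l: "l \<in> T - {i}" for l
    proof -
      have "cmod (ip L (blockmul d D i (u i)) (blockmul d D l (u l))) \<le> P * (t i * t l)"
        unfolding P_def t_def using i l T by (intro cross_block_correlation_le) auto
      then show ?thesis
        unfolding g_def using abs_Re_le_cmod[of "ip L (blockmul d D i (u i)) (blockmul d D l (u l))"]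
        by linarith
    qed
    then have "(\<Sum>l\<in>T - {i}. - (P * (t i * t l))) \<le> (\<Sum>l\<in>T - {i}. g i l)"
      by (rule sum_mono)
    then have "- (\<Sum>l\<in>T - {i}. P * (t i * t l)) \<le> (\<Sum>l\<in>T - {i}. g i l)"
      by (simp add: sum_negf)
    ultimately show ?thesis by linarith
  qed
  have "(a0 - (real (card T) - 1) * P) * (\<Sum>l\<in>T. (t l)\<^sup>2)
          \<le> a0 * (\<Sum>l\<in>T. (t l)\<^sup>2) - P * (\<Sum>i\<in>T. \<Sum>l\<in>T - {i}. t i * t l)"
    using mult_left_mono[OF offdiagonal_sum_le[OF T(1), of t] P_nonneg]
    by (simp add: algebra_simps)
  also have "\<dots> = (\<Sum>i\<in>T. a0 * (t i)\<^sup>2 - (\<Sum>l\<in>T - {i}. P * (t i * t l)))"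
    by (simp add: sum_subtractf sum_distrib_left)
  also have "\<dots> \<le> (\<Sum>i\<in>T. g i i + (\<Sum>l\<in>T - {i}. g i l))"
    using per_block by (rule sum_mono)
  also have "\<dots> = (\<Sum>i\<in>T. \<Sum>l\<in>T. g i l)"
    using T(1) by (intro sum.cong refl) (simp add: sum.remove)
  also have "\<dots> = (vnorm L (\<lambda>r. \<Sum>l\<in>T. blockmul d D l (u l) r))\<^sup>2"
    unfolding g_def Re_sum[symmetric] ip_sum_left[symmetric] ip_sum_right[symmetric] ip_self by simp
  finally show ?thesis unfolding a0_def P_def t_def by (simp add: mult_ac)
qed

lemma supported_energy_lower:
  assumes unit_cols: "\<forall>c < M * d. (\<Sum>r<L. (cmod (D r c))\<^sup>2) = 1"
    and T: "finite T" "T \<subseteq> {..<M}" and v: "supported_on M d T v"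
  shows "(1 - (real d - 1) * sub_coherence L M d D
            - (real (card T) - 1) * real d * block_coherence L M d D) * (vnorm (M * d) v)\<^sup>2
         \<le> (vnorm L (matvec L (M * d) D v))\<^sup>2"
proof -
  have "matvec L (M * d) D v = (\<lambda>r. \<Sum>l\<in>T. blockmul d D l (blk d v l) r)"
    using matvec_blocks[OF v T(2)] by blast
  then show ?thesis
    using block_energy_lower[OF unit_cols T, where u = "blk d v"]
    unfolding vnorm_blocks[OF v T(2)] blocknorm_def by simp
qed

section \<open>The least-squares step\<close>

text \<open>If x lives on the blocks T and xh is a least-squares fit of y = D x + w over the blocks T,
  then D (xh - x) is the projection of w onto the range of D_T, hence no longer than w.\<close>
lemma least_squares_fit_error:
  assumes est: "bth_estimate L M d D y T xh" and x: "supported_on M d T x"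
    and obs: "y = (\<lambda>r. matvec L (M * d) D x r + w r)"
  shows "(vnorm L (matvec L (M * d) D (\<lambda>c. xh c - x c)))\<^sup>2 \<le> (vnorm L w)\<^sup>2"
proof -
  define e where "e = (\<lambda>c. xh c - x c)"
  define De where "De = matvec L (M * d) D e"
  define res where "res = (\<lambda>r. y r - matvec L (M * d) D xh r)"
  have xh: "supported_on M d T xh" using est unfolding bth_estimate_def by simp
  have res_eq: "res = (\<lambda>r. w r - De r)"
    unfolding res_def obs De_def e_def matvec_def by (auto simp: right_diff_distrib sum_subtractf)
  txt \<open>Moving xh along the admissible direction e never decreases the residual.\<close>
  have "(vnorm L res)\<^sup>2 \<le> (vnorm L (\<lambda>r. res r - complex_of_real t * De r))\<^sup>2" for t
  proof -
    define z where "z = (\<lambda>c. xh c + complex_of_real t * e c)"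
    have "supported_on M d T z" using xh x unfolding supported_on_def z_def e_def by simp
    then have "vnorm L res \<le> vnorm L (\<lambda>r. y r - matvec L (M * d) D z r)"
      using est unfolding bth_estimate_def res_def by blast
    also have "(\<lambda>r. y r - matvec L (M * d) D z r) = (\<lambda>r. res r - complex_of_real t * De r)"
      unfolding res_def De_def z_def matvec_def
      by (simp add: distrib_left sum.distrib sum_distrib_left mult.left_commute diff_diff_eq)
    finally show ?thesis by (intro power_mono vnorm_nonneg)
  qed
  then have orth: "Re (ip L res De) = 0" by (rule orthogonal_if_shortest_on_line)
  have "w = (\<lambda>r. res r - complex_of_real (-1) * De r)" unfolding res_eq by simp
  then have "(vnorm L w)\<^sup>2 = (vnorm L res)\<^sup>2 + (vnorm L De)\<^sup>2"
    using vnorm_line_sq[of L res "-1" De] orth by simp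
  then show ?thesis unfolding De_def e_def by simp
qed

section \<open>Block correlations of the observation\<close>

lemma rho_lower_on_support:
  assumes unit_cols: "\<forall>c < M * d. (\<Sum>r<L. (cmod (D r c))\<^sup>2) = 1"
    and S: "finite S" "S \<subseteq> {..<M}" and i: "i \<in> S"
    and y: "y = (\<lambda>r. (\<Sum>l\<in>S. blockmul d D l (v l) r) + w r)"
    and X: "\<And>l. l \<in> S \<Longrightarrow> vnorm d (v l) \<le> X" and v_pos: "0 < vnorm d (v i)"
  shows "(1 - (real d - 1) * sub_coherence L M d D) * vnorm d (v i)
           - (real (card S) - 1) * (real d * block_coherence L M d D * X)
           - sqrt (1 + (real d - 1) * sub_coherence L M d D) * vnorm L w
         \<le> rho L d D y i"
proof -
  define a0 where "a0 = 1 - (real d - 1) * sub_coherence L M d D"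
  define P where "P = real d * block_coherence L M d D * X"
  define s where "s = sqrt (1 + (real d - 1) * sub_coherence L M d D)"
  define t where "t = vnorm d (v i)"
  define Di where "Di = blockmul d D i (v i)"
  define C where "C = (\<Sum>l\<in>S - {i}. ip L Di (blockmul d D l (v l)))"
  have iM: "i < M" using i S by auto
  have card_pos: "Suc 0 \<le> card S" using S(1) i card_gt_0_iff[of S] by auto
  have others: "S - {i} \<subseteq> {..<M}" using S(2) by auto
  have "ip L Di y = ip L Di Di + C + ip L Di w"
    unfolding y ip_add_right ip_sum_right C_def
    using sum.remove[OF S(1) i, of "\<lambda>l. ip L Di (blockmul d D l (v l))"] by (simp add: Di_def)
  then have "Re (ip L Di y) = Re (ip L Di Di) + Re C + Re (ip L Di w)" by simp
  moreover have "a0 * t\<^sup>2 \<le> Re (ip L Di Di)"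
    unfolding a0_def t_def Di_def using diagonal_block_lower[OF unit_cols iM] .
  moreover have "cmod C \<le> (real (card S) - 1) * P * t"
    using interference_le[of "S - {i}" M i d "v" X L D "v i"] others i X iM
    unfolding C_def P_def t_def Di_def by (simp add: card_Diff_singleton of_nat_diff card_pos)
  moreover have "cmod (ip L Di w) \<le> s * t * vnorm L w"
    unfolding s_def t_def Di_def using noise_correlation_le[OF unit_cols iM] .
  moreover have "Re (ip L Di y) \<le> t * rho L d D y i"
    using abs_Re_le_cmod[of "ip L Di y"] correlation_le_rho[of L d D i "v i" y]
    unfolding Di_def t_def by linarith
  ultimately have "t * (a0 * t - (real (card S) - 1) * P - s * vnorm L w) \<le> t * rho L d D y i"
    using abs_Re_le_cmod[of C] abs_Re_le_cmod[of "ip L Di w"]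
    by (simp add: algebra_simps power2_eq_square)
  then show ?thesis
    using v_pos unfolding a0_def P_def s_def t_def by (simp add: mult_le_cancel_left_pos)
qed

lemma rho_upper_off_support:
  assumes unit_cols: "\<forall>c < M * d. (\<Sum>r<L. (cmod (D r c))\<^sup>2) = 1"
    and S: "S \<subseteq> {..<M}" and j: "j < M" "j \<notin> S"
    and y: "y = (\<lambda>r. (\<Sum>l\<in>S. blockmul d D l (v l) r) + w r)"
    and X: "\<And>l. l \<in> S \<Longrightarrow> vnorm d (v l) \<le> X" "0 \<le> X"
  shows "rho L d D y j
         \<le> real (card S) * (real d * block_coherence L M d D * X)
           + sqrt (1 + (real d - 1) * sub_coherence L M d D) * vnorm L w"
proof (rule rho_le_if_correlations_le)
  show "0 \<le> real (card S) * (real d * block_coherence L M d D * X)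
              + sqrt (1 + (real d - 1) * sub_coherence L M d D) * vnorm L w"
    using X(2) block_coherence_nonneg[of L M d D] sub_coherence_factor_nonneg[of d L M D]
    by (intro add_nonneg_nonneg mult_nonneg_nonneg vnorm_nonneg) auto
next
  fix u
  have "cmod (ip L (blockmul d D j u) y)
          \<le> cmod (\<Sum>l\<in>S. ip L (blockmul d D j u) (blockmul d D l (v l)))
            + cmod (ip L (blockmul d D j u) w)"
    unfolding y ip_add_right ip_sum_right by (rule norm_triangle_ineq)
  also have "\<dots> \<le> real (card S) * (real d * block_coherence L M d D * X) * vnorm d u
                  + sqrt (1 + (real d - 1) * sub_coherence L M d D) * vnorm d u * vnorm L w"
    using interference_le[OF S j(1,2) X(1)] noise_correlation_le[OF unit_cols j(1)]
    by (rule add_mono)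
  finally show "cmod (ip L (blockmul d D j u) y)
          \<le> (real (card S) * (real d * block_coherence L M d D * X)
              + sqrt (1 + (real d - 1) * sub_coherence L M d D) * vnorm L w) * vnorm d u"
    by (simp add: algebra_simps)
qed

lemma threshold_condition_gap:
  fixes a m X \<epsilon> s \<mu> :: real and k d :: nat
  assumes cond: "a * m > 2 * \<epsilon> * s + (2 * real k - 1) * real d * \<mu> * X"
    and "0 < m" "m \<le> X" "0 \<le> \<epsilon>" "0 \<le> s" "0 \<le> \<mu>" "1 \<le> k"
  shows "(real k - 1) * real d * \<mu> < a"
proof -
  define K where "K = (2 * real k - 1) * real d * \<mu>"
  have K_nonneg: "0 \<le> K" unfolding K_def using assms by simp
  have "K * m \<le> K * X" using assms K_nonneg by (intro mult_left_mono) auto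
  moreover have "0 \<le> 2 * \<epsilon> * s" using assms by simp
  ultimately have "K * m < a * m" using cond unfolding K_def by linarith
  then have "K < a" using \<open>0 < m\<close> by simp
  moreover have "(real k - 1) * real d * \<mu> \<le> K"
    unfolding K_def using assms by (intro mult_right_mono) auto
  ultimately show ?thesis by linarith
qed

lemma support_separation:
  assumes unit_cols: "\<forall>c < M * d. (\<Sum>r<L. (cmod (D r c))\<^sup>2) = 1"
    and S: "finite S" "S \<subseteq> {..<M}" "card S \<le> k"
    and y: "y = (\<lambda>r. (\<Sum>l\<in>S. blockmul d D l (v l) r) + w r)"
    and bounds: "\<And>l. l \<in> S \<Longrightarrow> m \<le> vnorm d (v l) \<and> vnorm d (v l) \<le> X" and m_pos: "0 < m"
    and noise: "vnorm L w \<le> \<epsilon>"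
    and cond: "(1 - (real d - 1) * sub_coherence L M d D) * m
               > 2 * \<epsilon> * sqrt (1 + (real d - 1) * sub_coherence L M d D)
                 + (2 * real k - 1) * real d * block_coherence L M d D * X"
    and i: "i \<in> S" and j: "j < M" "j \<notin> S"
  shows "rho L d D y j < rho L d D y i"
proof -
  define a0 where "a0 = 1 - (real d - 1) * sub_coherence L M d D"
  define P where "P = real d * block_coherence L M d D * X"
  define s where "s = sqrt (1 + (real d - 1) * sub_coherence L M d D)"
  have mX: "m \<le> vnorm d (v i)" "vnorm d (v i) \<le> X" using bounds[OF i] by auto
  have k: "1 \<le> k" using S(1,3) i card_gt_0_iff[of S] by auto
  have eps: "0 \<le> \<epsilon>" using noise vnorm_nonneg order_trans by blast
  have s: "0 \<le> s" unfolding s_def using sub_coherence_factor_nonneg by simp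
  have P: "0 \<le> P" unfolding P_def using block_coherence_nonneg[of L M d D] mX m_pos by simp
  have "(real k - 1) * real d * block_coherence L M d D < a0"
    unfolding a0_def
    by (rule threshold_condition_gap[OF cond m_pos])
      (use mX eps s k block_coherence_nonneg in \<open>auto simp: s_def\<close>)
  moreover have "0 \<le> (real k - 1) * real d * block_coherence L M d D"
    using k block_coherence_nonneg[of L M d D] by simp
  ultimately have "0 < a0" by linarith
  have "rho L d D y i \<ge> a0 * vnorm d (v i) - (real (card S) - 1) * P - s * vnorm L w"
    unfolding a0_def P_def s_def
    using rho_lower_on_support[OF unit_cols S(1,2) i y, of X] bounds m_pos mX by fastforce
  moreover have "rho L d D y j \<le> real (card S) * P + s * vnorm L w"
    unfolding P_def s_def using rho_upper_off_support[OF unit_cols S(2) j y] bounds mX m_pos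
    by fastforce
  moreover have "a0 * m \<le> a0 * vnorm d (v i)" using \<open>0 < a0\<close> mX by simp
  moreover have "real (card S) * P \<le> real k * P" using S(3) P by (simp add: mult_right_mono)
  moreover have "s * vnorm L w \<le> s * \<epsilon>" using noise s by (rule mult_left_mono)
  moreover have "(2 * real k - 1) * real d * block_coherence L M d D * X = 2 * (real k * P) - P"
    unfolding P_def by (simp add: algebra_simps)
  moreover have "(real (card S) - 1) * P = real (card S) * P - P" "2 * \<epsilon> * s = 2 * (s * \<epsilon>)"
    by (simp_all add: algebra_simps)
  ultimately show ?thesis using cond unfolding a0_def[symmetric] s_def[symmetric] by linarith
qed

lemma top_selection_contains:
  fixes f :: "'a \<Rightarrow> real"
  assumes fin: "finite S" "finite Sh" and sub: "S \<subseteq> U" "Sh \<subseteq> U" and card: "card S \<le> card Sh"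
    and sep: "\<And>i j. i \<in> S \<Longrightarrow> j \<in> U - S \<Longrightarrow> f j < f i"
    and top: "\<And>i j. i \<in> Sh \<Longrightarrow> j \<in> U - Sh \<Longrightarrow> f j \<le> f i"
  shows "S \<subseteq> Sh"
proof (rule ccontr)
  assume "\<not> S \<subseteq> Sh"
  then obtain i where i: "i \<in> S" "i \<notin> Sh" by blast
  have "Sh \<subseteq> S"
  proof
    fix j assume j: "j \<in> Sh"
    have "f i \<le> f j" using top[OF j] i sub by blast
    then show "j \<in> S" using sep[OF i(1)] j sub by force
  qed
  then have "Sh = S" using card fin by (simp add: card_subset_eq le_antisym card_mono)
  then show False using i by simp
qed

theorem theorem1:
  fixes L M d k :: nat
    and D :: "nat \<Rightarrow> nat \<Rightarrow> complex"
    and x w y xh :: "nat \<Rightarrow> complex"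
    and Sh :: "nat set"
    and \<epsilon> :: real
  assumes unit_cols: "\<forall>c < M * d. (\<Sum>r<L. (cmod (D r c))\<^sup>2) = 1"
    and LN: "L < M * d"
    and rank: "full_rank_k L M d k D"
    and sparse: "card (bsupp M d x) \<le> k"
    and x_nz: "\<exists>c < M * d. x c \<noteq> 0"
    and eps_pos: "\<epsilon> > 0"
    and noise: "vnorm L w \<le> \<epsilon>"
    and obs: "y = (\<lambda>r. matvec L (M * d) D x r + w r)"
    and cond: "(1 - (real d - 1) * sub_coherence L M d D) * Min (blocknorm d x ` bsupp M d x)
               > 2 * \<epsilon> * sqrt (1 + (real d - 1) * sub_coherence L M d D)
                 + (2 * real k - 1) * real d * block_coherence L M d D
                   * Max (blocknorm d x ` bsupp M d x)"
    and sel: "bth_selection L M d k D y Sh"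
    and est: "bth_estimate L M d D y Sh xh"
  shows "bsupp M d x \<subseteq> Sh \<and>
         (vnorm (M * d) (\<lambda>c. xh c - x c))\<^sup>2
           \<le> \<epsilon>\<^sup>2 / (1 - (real d - 1) * sub_coherence L M d D
                     - (real k - 1) * real d * block_coherence L M d D)"
proof -
  define S where "S = bsupp M d x"
  note S_props = bsupp_properties[OF x_nz, folded S_def]
  have S_fin: "finite S" using S_props(2) finite_subset by blast
  have Sh: "Sh \<subseteq> {..<M}" "finite Sh" "card Sh = k"
    using sel finite_subset unfolding bth_selection_def by auto
  have bounds: "Min (blocknorm d x ` S) \<le> blocknorm d x l \<and> blocknorm d x l \<le> Max (blocknorm d x ` S)"
    if "l \<in> S" for l using S_fin that by simp
  have min_pos: "0 < Min (blocknorm d x ` S)" using S_fin S_props(3,5) by simp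
  have y: "y = (\<lambda>r. (\<Sum>l\<in>S. blockmul d D l (blk d x l) r) + w r)"
    unfolding obs matvec_blocks[OF S_props(4,2)] ..
  have "\<And>i j. i \<in> S \<Longrightarrow> j \<in> {..<M} - S \<Longrightarrow> rho L d D y j < rho L d D y i"
    using support_separation[OF unit_cols S_fin S_props(2) sparse[folded S_def] y _ min_pos noise]
      bounds cond unfolding S_def blocknorm_def by blast
  then have support: "S \<subseteq> Sh"
    using top_selection_contains[OF S_fin Sh(2) S_props(2) Sh(1)] sel sparse Sh(3)
    unfolding bth_selection_def S_def by blast
  have x_Sh: "supported_on M d Sh x" using S_props(4) support unfolding supported_on_def by blast
  have err_Sh: "supported_on M d Sh (\<lambda>c. xh c - x c)"
    using est x_Sh unfolding bth_estimate_def supported_on_def by simp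
  have "(1 - (real d - 1) * sub_coherence L M d D - (real k - 1) * real d * block_coherence L M d D)
          * (vnorm (M * d) (\<lambda>c. xh c - x c))\<^sup>2
        \<le> (vnorm L (matvec L (M * d) D (\<lambda>c. xh c - x c)))\<^sup>2"
    using supported_energy_lower[OF unit_cols Sh(2,1) err_Sh] Sh(3) by simp
  also have "\<dots> \<le> (vnorm L w)\<^sup>2" using least_squares_fit_error[OF est x_Sh obs] .
  also have "\<dots> \<le> \<epsilon>\<^sup>2" using noise vnorm_nonneg by (rule power_mono)
  finally have energy: "(1 - (real d - 1) * sub_coherence L M d D
                           - (real k - 1) * real d * block_coherence L M d D)
                        * (vnorm (M * d) (\<lambda>c. xh c - x c))\<^sup>2 \<le> \<epsilon>\<^sup>2" .
  have "(real k - 1) * real d * block_coherence L M d D < 1 - (real d - 1) * sub_coherence L M d D"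
    using S_props(3) bounds min_pos eps_pos sparse[folded S_def] card_gt_0_iff[of S] S_fin
    by (intro threshold_condition_gap[OF cond[folded S_def]])
      (auto simp: sub_coherence_factor_nonneg block_coherence_nonneg)
  then show ?thesis
    using support energy unfolding S_def by (simp add: pos_le_divide_eq mult.commute)
qed

end
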